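(* Let $V$ be a real Hilbert space, $W\subset V$ a finite-dimensional subspace, and $\mathcal M\subset V$ a compact set. For $\sigma\ge0$ let $\mathcal M_\sigma=\{v\in V:\operatorname{dist}(v,\mathcal M)\le\sigma\}$, $$\delta_\sigma=\sup\{\|u-v\|: u,v\in\mathcal M_\sigma,\ u-v\in W^\perp\},\qquad \tilde\delta_\sigma=\sup\{\|u-v\|: u,v\in\mathcal M,\ \|P_Wu-P_Wv\|\le\sigma\}.$$ Then for every $\sigma>0$, $$\delta_\sigma-2\sigma\le\tilde\delta_{2\sigma}\le\delta_\sigma+2\sigma.$$
   Context: $P_W$ is the orthogonal projection onto $W$, $W^\perp$ its orthogonal complement, and $\operatorname{dist}(v,\mathcal M)=\inf_{u\in\mathcal M}\|v-u\|$. *)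

theory Defs
  imports "HOL-Analysis.Analysis"
begin

definition orth_proj :: "'a::real_inner set \<Rightarrow> 'a \<Rightarrow> 'a" where
  "orth_proj W v = (THE p. p \<in> W \<and> v - p \<in> orthogonal_comp W)"

definition nbhd_set :: "'a::real_inner set \<Rightarrow> real \<Rightarrow> 'a set" where
  "nbhd_set M \<sigma> = {v. infdist v M \<le> \<sigma>}"

definition delta :: "'a::real_inner set \<Rightarrow> 'a set \<Rightarrow> real \<Rightarrow> real" where
  "delta W M \<sigma> = Sup {norm (u - v) | u v. u \<in> nbhd_set M \<sigma> \<and> v \<in> nbhd_set M \<sigma> \<and> u - v \<in> orthogonal_comp W}"

definition delta_tilde :: "'a::real_inner set \<Rightarrow> 'a set \<Rightarrow> real \<Rightarrow> real" where
  "delta_tilde W M \<sigma> = Sup {norm (u - v) | u v. u \<in> M \<and> v \<in> M \<and> norm (orth_proj W u - orth_proj W v) \<le> \<sigma>}"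

end

theory Submission
  imports Defs
begin

text \<open>Both inequalities compare the two suprema pair by pair, and the map between pairs moves
  each point by at most \<open>\<sigma>\<close>. A pair \<open>u, v\<close> of \<open>\<M>\<^sub>\<sigma>\<close> with \<open>u - v \<bottom> W\<close> is replaced by nearest points
  \<open>u\<^sub>0, v\<^sub>0 \<in> \<M>\<close>; since the projection is a contraction killing \<open>u - v\<close>, the projections of
  \<open>u\<^sub>0, v\<^sub>0\<close> are \<open>2\<sigma>\<close>-close. Conversely, for \<open>u, v \<in> \<M>\<close> with \<open>d = P\<^sub>W u - P\<^sub>W v\<close> of norm at most
  \<open>2\<sigma>\<close>, the points \<open>u - d/2\<close> and \<open>v + d/2\<close> lie in \<open>\<M>\<^sub>\<sigma>\<close> and differ by a vector orthogonal to \<open>W\<close>.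
  The projection onto a finite-dimensional subspace of an arbitrary inner product space exists
  by Gram--Schmidt orthogonalisation.\<close>

lemma Gram_Schmidt_step_finite:
  fixes S :: "'a::real_inner set"
  assumes "finite S" and "pairwise orthogonal S" and "x \<in> span S"
  shows "orthogonal x (a - (\<Sum>b\<in>S. (b \<bullet> a / (b \<bullet> b)) *\<^sub>R b))"
proof -
  have "orthogonal (a - (\<Sum>b\<in>S. (b \<bullet> a / (b \<bullet> b)) *\<^sub>R b)) y" if "y \<in> S" for y
  proof -
    have "a \<bullet> y = (\<Sum>b\<in>S. if b = y then b \<bullet> a else 0)"
      using assms(1) that by (simp add: inner_commute)
    also have "\<dots> = (\<Sum>b\<in>S. b \<bullet> a * (b \<bullet> y) / (b \<bullet> b))"
      using assms(2) that by (intro sum.cong) (auto simp: pairwise_def orthogonal_def)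
    finally show ?thesis
      by (simp add: orthogonal_def algebra_simps inner_sum_left)
  qed
  then show ?thesis
    using assms(3) orthogonal_to_span orthogonal_commute by blast
qed

lemma finite_span_orthogonal_basis:
  fixes B :: "'a::real_inner set"
  assumes "finite B"
  obtains U where "finite U" "pairwise orthogonal U" "span U = span B"
proof -
  have "\<exists>U. finite U \<and> pairwise orthogonal U \<and> span U = span B"
    using assms
  proof (induction B)
    case empty
    show ?case by (rule exI[of _ "{}"]) simp
  next
    case (insert a B)
    then obtain U where U: "finite U" "pairwise orthogonal U" "span U = span B"
      by blast
    define a' where "a' = a - (\<Sum>b\<in>U. (b \<bullet> a / (b \<bullet> b)) *\<^sub>R b)"
    have "pairwise orthogonal (insert a' U)"
      using U Gram_Schmidt_step_finite[OF U(1,2) span_base]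
      by (intro pairwise_orthogonal_insert) (auto simp: a'_def orthogonal_commute)
    moreover have "span (insert a' U) = span (insert a U)"
      by (rule eq_span_insert_eq) (simp add: a'_def span_neg span_sum span_base span_mul)
    moreover have "span (insert a U) = span (insert a B)"
      using U(3) by (metis span_insert)
    ultimately show ?case
      using U(1) by (intro exI[of _ "insert a' U"]) simp
  qed
  then show ?thesis
    using that by blast
qed

lemma finite_span_orthogonal_decomposition:
  fixes B :: "'a::real_inner set"
  assumes "finite B"
  shows "\<exists>p\<in>span B. v - p \<in> (span B)\<^sup>\<bottom>"
proof -
  obtain U where U: "finite U" "pairwise orthogonal U" "span U = span B"
    using finite_span_orthogonal_basis[OF assms] .
  define p where "p = (\<Sum>b\<in>U. (b \<bullet> v / (b \<bullet> b)) *\<^sub>R b)"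
  have "p \<in> span U"
    unfolding p_def by (intro span_sum span_mul span_base)
  moreover have "v - p \<in> (span U)\<^sup>\<bottom>"
    using Gram_Schmidt_step_finite[OF U(1,2)] unfolding orthogonal_comp_def p_def by auto
  ultimately show ?thesis
    using U(3) by auto
qed

lemma orth_proj_eqI:
  assumes "subspace W" and "p \<in> W" and "v - p \<in> W\<^sup>\<bottom>"
  shows "orth_proj W v = p"
  unfolding orth_proj_def
proof (rule the_equality)
  show "p \<in> W \<and> v - p \<in> W\<^sup>\<bottom>"
    using assms(2,3) ..
  fix q
  assume q: "q \<in> W \<and> v - q \<in> W\<^sup>\<bottom>"
  have "p - q \<in> W"
    using subspace_diff[OF assms(1,2)] q by blast
  moreover have "(v - q) - (v - p) \<in> W\<^sup>\<bottom>"
    using subspace_diff[OF subspace_orthogonal_comp] q assms(3) by blast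
  ultimately have "p - q \<in> W \<inter> W\<^sup>\<bottom>"
    by simp
  then show "q = p"
    using orthogonal_Int_0[OF assms(1)] by simp
qed

lemma orth_proj_eq_0:
  assumes "subspace W" and "x \<in> W\<^sup>\<bottom>"
  shows "orth_proj W x = 0"
  by (rule orth_proj_eqI) (simp_all add: assms subspace_0)

context
  fixes W :: "'a::real_inner set"
  assumes subspace: "subspace W"
    and decomposition: "\<And>v. \<exists>p\<in>W. v - p \<in> W\<^sup>\<bottom>"
begin

lemma orth_proj_in: "orth_proj W v \<in> W"
  and orth_proj_residual: "v - orth_proj W v \<in> W\<^sup>\<bottom>"
proof -
  obtain p where "p \<in> W" "v - p \<in> W\<^sup>\<bottom>"
    using decomposition by blast
  with orth_proj_eqI[OF subspace] show "orth_proj W v \<in> W" "v - orth_proj W v \<in> W\<^sup>\<bottom>"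
    by simp_all
qed

lemma orth_proj_diff: "orth_proj W (u - v) = orth_proj W u - orth_proj W v"
proof (rule orth_proj_eqI[OF subspace])
  show "orth_proj W u - orth_proj W v \<in> W"
    by (simp add: orth_proj_in subspace subspace_diff)
  have "u - v - (orth_proj W u - orth_proj W v) = (u - orth_proj W u) - (v - orth_proj W v)"
    by simp
  then show "u - v - (orth_proj W u - orth_proj W v) \<in> W\<^sup>\<bottom>"
    by (metis orth_proj_residual subspace_diff subspace_orthogonal_comp)
qed

lemma norm_orth_proj_le: "norm (orth_proj W x) \<le> norm x"
proof -
  let ?p = "orth_proj W x"
  have "orthogonal ?p (x - ?p)"
    using orth_proj_in orth_proj_residual unfolding orthogonal_comp_def by blast
  then have "norm (?p + (x - ?p)) ^ 2 = norm ?p ^ 2 + norm (x - ?p) ^ 2"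
    by (rule norm_add_Pythagorean)
  then have "norm ?p ^ 2 \<le> norm x ^ 2"
    by simp
  then show ?thesis
    by (rule power2_le_imp_le) simp
qed

end

lemma nbhd_set_nearest:
  fixes M :: "'a::real_inner set"
  assumes "compact M" and "M \<noteq> {}" and "u \<in> nbhd_set M \<sigma>"
  obtains x where "x \<in> M" "dist u x \<le> \<sigma>"
proof -
  have "continuous_on M (dist u)"
    by (intro continuous_intros)
  then obtain x where x: "x \<in> M" "\<And>y. y \<in> M \<Longrightarrow> dist u x \<le> dist u y"
    using continuous_attains_inf[OF assms(1,2)] by blast
  have "dist u x \<le> infdist u M"
    unfolding infdist_def using assms(2) x by (auto intro: cINF_greatest)
  with assms(3) x(1) show ?thesis
    by (intro that) (auto simp: nbhd_set_def)
qed

lemma nbhd_set_memI: "x \<in> M \<Longrightarrow> dist u x \<le> \<sigma> \<Longrightarrow> u \<in> nbhd_set M \<sigma>"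
  by (simp add: nbhd_set_def infdist_le2)

lemma bounded_nbhd_set:
  fixes M :: "'a::real_inner set"
  assumes "compact M" and "M \<noteq> {}"
  shows "bounded (nbhd_set M \<sigma>)"
proof -
  obtain R where R: "\<And>x. x \<in> M \<Longrightarrow> norm x \<le> R"
    using compact_imp_bounded[OF assms(1)] by (auto simp: bounded_iff)
  have "norm u \<le> R + \<sigma>" if u: "u \<in> nbhd_set M \<sigma>" for u
  proof -
    obtain x where "x \<in> M" "dist u x \<le> \<sigma>"
      using nbhd_set_nearest[OF assms u] .
    then show ?thesis
      using R[of x] norm_triangle_ineq[of "u - x" x] by (simp add: dist_norm)
  qed
  then show ?thesis
    by (auto simp: bounded_iff)
qed

lemma bdd_above_norm_diff:
  fixes S :: "'a::real_normed_vector set"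
  assumes "bounded S"
  shows "bdd_above {norm (u - v) | u v. u \<in> S \<and> v \<in> S \<and> P u v}"
  using diameter_bounded_bound[OF assms] by (intro bdd_aboveI[of _ "diameter S"]) (auto simp: dist_norm)

lemma norm_diff_le_delta:
  assumes "compact M" and "M \<noteq> {}"
    and "u \<in> nbhd_set M \<sigma>" and "v \<in> nbhd_set M \<sigma>" and "u - v \<in> W\<^sup>\<bottom>"
  shows "norm (u - v) \<le> delta W M \<sigma>"
  unfolding delta_def using assms
  by (intro cSup_upper bdd_above_norm_diff bounded_nbhd_set) blast+

lemma norm_diff_le_delta_tilde:
  assumes "bounded M" and "u \<in> M" and "v \<in> M"
    and "norm (orth_proj W u - orth_proj W v) \<le> \<tau>"
  shows "norm (u - v) \<le> delta_tilde W M \<tau>"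
  unfolding delta_tilde_def using assms
  by (intro cSup_upper bdd_above_norm_diff) blast+

lemma delta_le_delta_tilde:
  fixes W M :: "'a::real_inner set"
  assumes "subspace W" and "\<And>v. \<exists>p\<in>W. v - p \<in> W\<^sup>\<bottom>"
    and "compact M" and "M \<noteq> {}" and "0 \<le> \<sigma>"
  shows "delta W M \<sigma> \<le> delta_tilde W M (2 * \<sigma>) + 2 * \<sigma>"
  unfolding delta_def
proof (rule cSup_least)
  obtain m where "m \<in> M"
    using assms(4) by blast
  then have "m \<in> nbhd_set M \<sigma>"
    using nbhd_set_memI[of m M m \<sigma>] assms(5) by simp
  moreover have "m - m \<in> W\<^sup>\<bottom>"
    by (simp add: subspace_0[OF subspace_orthogonal_comp])
  ultimately show "{norm (u - v) | u v. u \<in> nbhd_set M \<sigma> \<and> v \<in> nbhd_set M \<sigma> \<and> u - v \<in> W\<^sup>\<bottom>} \<noteq> {}"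
    by blast
next
  fix y
  assume "y \<in> {norm (u - v) | u v. u \<in> nbhd_set M \<sigma> \<and> v \<in> nbhd_set M \<sigma> \<and> u - v \<in> W\<^sup>\<bottom>}"
  then obtain u v where uv: "y = norm (u - v)" "u \<in> nbhd_set M \<sigma>" "v \<in> nbhd_set M \<sigma>" "u - v \<in> W\<^sup>\<bottom>"
    by blast
  obtain u0 where u0: "u0 \<in> M" "dist u u0 \<le> \<sigma>"
    using nbhd_set_nearest[OF assms(3,4) uv(2)] .
  obtain v0 where v0: "v0 \<in> M" "dist v v0 \<le> \<sigma>"
    using nbhd_set_nearest[OF assms(3,4) uv(3)] .
  let ?P = "orth_proj W"
  have "?P u0 - ?P v0 = ?P (u0 - u) - ?P (v0 - v) + ?P (u - v)"
    by (simp add: orth_proj_diff[OF assms(1,2)])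
  also have "?P (u - v) = 0"
    using orth_proj_eq_0[OF assms(1) uv(4)] .
  finally have "norm (?P u0 - ?P v0) \<le> norm (u0 - u) + norm (v0 - v)"
    using norm_triangle_ineq4[of "?P (u0 - u)" "?P (v0 - v)"]
      norm_orth_proj_le[OF assms(1,2), of "u0 - u"] norm_orth_proj_le[OF assms(1,2), of "v0 - v"]
    by simp
  also have "\<dots> \<le> 2 * \<sigma>"
    using u0(2) v0(2) by (simp add: dist_norm norm_minus_commute)
  finally have "norm (?P u0 - ?P v0) \<le> 2 * \<sigma>" .
  then have "norm (u0 - v0) \<le> delta_tilde W M (2 * \<sigma>)"
    using norm_diff_le_delta_tilde compact_imp_bounded[OF assms(3)] u0(1) v0(1) by blast
  moreover have "norm (u - v) \<le> norm (u - u0) + norm (u0 - v0) + norm (v0 - v)"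
    using norm_triangle_ineq[of "u - u0" "u0 - v0"] norm_triangle_ineq[of "u - v0" "v0 - v"]
    by (simp add: algebra_simps)
  ultimately show "y \<le> delta_tilde W M (2 * \<sigma>) + 2 * \<sigma>"
    using uv(1) u0(2) v0(2) by (simp add: dist_norm norm_minus_commute)
qed

lemma delta_tilde_le_delta:
  fixes W M :: "'a::real_inner set"
  assumes "subspace W" and "\<And>v. \<exists>p\<in>W. v - p \<in> W\<^sup>\<bottom>"
    and "compact M" and "M \<noteq> {}" and "0 \<le> \<sigma>"
  shows "delta_tilde W M (2 * \<sigma>) \<le> delta W M \<sigma> + 2 * \<sigma>"
  unfolding delta_tilde_def
proof (rule cSup_least)
  obtain m where "m \<in> M"
    using assms(4) by blast
  moreover have "norm (orth_proj W m - orth_proj W m) \<le> 2 * \<sigma>"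
    using assms(5) by simp
  ultimately show "{norm (u - v) | u v. u \<in> M \<and> v \<in> M \<and> norm (orth_proj W u - orth_proj W v) \<le> 2 * \<sigma>} \<noteq> {}"
    by blast
next
  fix y
  assume "y \<in> {norm (u - v) | u v. u \<in> M \<and> v \<in> M \<and> norm (orth_proj W u - orth_proj W v) \<le> 2 * \<sigma>}"
  then obtain u v where uv: "y = norm (u - v)" "u \<in> M" "v \<in> M"
    and d: "norm (orth_proj W u - orth_proj W v) \<le> 2 * \<sigma>"
    by blast
  define d where "d = orth_proj W u - orth_proj W v"
  define u' where "u' = u - (1/2) *\<^sub>R d"
  define v' where "v' = v + (1/2) *\<^sub>R d"
  have u'v': "u' - v' = (u - v) - d"
    unfolding u'_def v'_def by (simp add: algebra_simps flip: scaleR_add_left)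
  have "u' \<in> nbhd_set M \<sigma>"
    using d by (intro nbhd_set_memI[OF uv(2)]) (simp add: u'_def d_def dist_norm)
  moreover have "v' \<in> nbhd_set M \<sigma>"
    using d by (intro nbhd_set_memI[OF uv(3)]) (simp add: v'_def d_def dist_norm)
  moreover have "u' - v' \<in> W\<^sup>\<bottom>"
    using orth_proj_residual[OF assms(1,2), of "u - v"]
    by (simp add: u'v' d_def orth_proj_diff[OF assms(1,2)])
  ultimately have "norm (u' - v') \<le> delta W M \<sigma>"
    using norm_diff_le_delta[OF assms(3,4)] by blast
  moreover have "norm (u - v) \<le> norm (u' - v') + norm d"
    using u'v' norm_triangle_ineq[of "u' - v'" d] by simp
  ultimately show "y \<le> delta W M \<sigma> + 2 * \<sigma>"
    using uv(1) d by (simp add: d_def)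
qed

theorem mainTheorem6:
  fixes W M :: "'a::{real_inner, complete_space} set" and \<sigma> :: real
  assumes "subspace W" and "\<exists>B. finite B \<and> W = span B"
    and "compact M" and "M \<noteq> {}"
    and "\<sigma> > 0"
  shows "delta W M \<sigma> - 2 * \<sigma> \<le> delta_tilde W M (2 * \<sigma>) \<and>
         delta_tilde W M (2 * \<sigma>) \<le> delta W M \<sigma> + 2 * \<sigma>"
proof -
  obtain B where "finite B" "W = span B"
    using assms(2) by blast
  then have decomposition: "\<And>v. \<exists>p\<in>W. v - p \<in> W\<^sup>\<bottom>"
    using finite_span_orthogonal_decomposition by simp
  have "0 \<le> \<sigma>"
    using assms(5) by simp
  with delta_le_delta_tilde[OF assms(1) decomposition assms(3,4)]
    delta_tilde_le_delta[OF assms(1) decomposition assms(3,4)]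
  show ?thesis
    by (simp add: algebra_simps)
qed

end
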